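(* For every integer $n\ge1$ and every $u\in V$, the normalizing factor satisfies $Z_u\ge \dfrac{1}{6\ln(2en)}$.
   Context: For an integer $n\ge1$, the $n$-octahedral graph $G'_n=(V,E')$ is the undirected graph with vertex set $V=\{u\in\mathbb{Z}^3:|u_1|+|u_2|+|u_3|=n\}$ and edge set $E'=\{\{v,w\}\subset V: v\neq w,\ |v_i-w_i|\le 1 \text{ for all } i=1,2,3\}$. For $u,v\in V$, $d_{uv}$ denotes the shortest-path (number of edges) distance between $u$ and $v$ in $G'_n$. For $u\in V$, $Z_u=\left(\sum_{w\in V\setminus\{u\}} d_{uw}^{-2}\right)^{-1}$. *)

theory Defs
  imports Complex_Main
begin

type_synonym pt = "int \<times> int \<times> int"

definition oct_V :: "nat \<Rightarrow> pt set" where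
  "oct_V n = {(a, b, c). \<bar>a\<bar> + \<bar>b\<bar> + \<bar>c\<bar> = int n}"

definition oct_E :: "nat \<Rightarrow> (pt \<times> pt) set" where
  "oct_E n = {((a1, b1, c1), (a2, b2, c2)).
      (a1, b1, c1) \<in> oct_V n \<and> (a2, b2, c2) \<in> oct_V n \<and>
      (a1, b1, c1) \<noteq> (a2, b2, c2) \<and>
      \<bar>a1 - a2\<bar> \<le> 1 \<and> \<bar>b1 - b2\<bar> \<le> 1 \<and> \<bar>c1 - c2\<bar> \<le> 1}"

definition oct_dist :: "nat \<Rightarrow> pt \<Rightarrow> pt \<Rightarrow> nat" where
  "oct_dist n u v = (LEAST k. (u, v) \<in> (oct_E n) ^^ k)"

definition oct_Z :: "nat \<Rightarrow> pt \<Rightarrow> real" where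
  "oct_Z n u = inverse (\<Sum>w \<in> oct_V n - {u}. 1 / (real (oct_dist n u w))\<^sup>2)"

end

theory Submission
  imports Defs "HOL-Analysis.Harmonic_Numbers"
begin

text \<open>
  Graph distance is at least half the l1-distance: both endpoints of an edge have the same
  l1-norm, so they differ by at most 2 in l1. Reflecting coordinates we may assume that
  \<open>u = (A, B, C)\<close> lies in the closed positive octant; half the l1-distance from \<open>u\<close> to a
  vertex \<open>w\<close> is then \<open>A + B + C\<close> minus the coordinates of \<open>w\<close> clipped to \<open>[0, A] \<times> [0, B] \<times> [0, C]\<close>.
  The planes \<open>w\<^sub>i = 0\<close> and \<open>w\<^sub>i = u\<^sub>i\<close> cut the octahedron into 27 regions on which this is
  affine, and summing \<open>1 / d\<^sup>2\<close> over each region yields differences of harmonic numbers, partial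
  sums of \<open>1 / k\<^sup>2\<close>, or a triangle of vertices at constant distance. The harmonic terms
  telescope to \<open>2 (H\<^sub>A\<^sub>+\<^sub>B + H\<^sub>A\<^sub>+\<^sub>C + H\<^sub>B\<^sub>+\<^sub>C)\<close>, which by concavity of \<open>ln\<close> is \<open>6 ln (2n)\<close> plus a
  constant, and the constants add up to less than 6.
\<close>

fun l1_dist :: "pt \<Rightarrow> pt \<Rightarrow> int" where
  "l1_dist (a, b, c) (x, y, z) = \<bar>a - x\<bar> + \<bar>b - y\<bar> + \<bar>c - z\<bar>"

lemma l1_dist_triangle: "l1_dist u w \<le> l1_dist u v + l1_dist v w"
  by (cases u; cases v; cases w) auto

lemma l1_dist_pos: "u \<noteq> w \<Longrightarrow> 0 < l1_dist u w"
  by (cases u; cases w) auto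

text \<open>Both endpoints of an edge have the same l1-norm, so the three coordinate differences
  have even sum and cannot all be \<open>\<plusminus>1\<close>.\<close>
lemma l1_dist_le_2_if_oct_E:
  assumes "(v, w) \<in> oct_E n"
  shows "l1_dist v w \<le> 2"
proof -
  obtain a1 b1 c1 a2 b2 c2 where vw: "v = (a1, b1, c1)" "w = (a2, b2, c2)"
    by (cases v; cases w)
  from assms have "\<bar>a1 - a2\<bar> \<le> 1" "\<bar>b1 - b2\<bar> \<le> 1" "\<bar>c1 - c2\<bar> \<le> 1"
    "\<bar>a1\<bar> + \<bar>b1\<bar> + \<bar>c1\<bar> = \<bar>a2\<bar> + \<bar>b2\<bar> + \<bar>c2\<bar>"
    unfolding oct_E_def oct_V_def vw by auto
  then show ?thesis unfolding vw by (simp add: abs_if split: if_splits; presburger)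
qed

lemma l1_dist_le_if_relpow_oct_E: "(v, w) \<in> oct_E n ^^ k \<Longrightarrow> l1_dist v w \<le> 2 * int k"
proof (induction k arbitrary: w)
  case 0
  then show ?case by (cases w) simp
next
  case (Suc k)
  then obtain y where "(v, y) \<in> oct_E n ^^ k" "(y, w) \<in> oct_E n" by auto
  with Suc.IH l1_dist_le_2_if_oct_E l1_dist_triangle[of v w y] show ?case by fastforce
qed

lemma sym_oct_E: "sym (oct_E n)"
  unfolding sym_def oct_E_def by (auto simp: abs_minus_commute)

lemma oct_E_step_up:
  assumes "(x, y, z) \<in> oct_V n" "x < int n"
  obtains y' z' where "((x, y, z), (x + 1, y', z')) \<in> oct_E n"
proof -
  have norm: "\<bar>x\<bar> + \<bar>y\<bar> + \<bar>z\<bar> = int n" using assms(1) unfolding oct_V_def by simp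
  have "\<exists>y' z'. \<bar>x + 1\<bar> + \<bar>y'\<bar> + \<bar>z'\<bar> = int n \<and> \<bar>y - y'\<bar> \<le> 1 \<and> \<bar>z - z'\<bar> \<le> 1"
  proof (cases "x < 0")
    case True
    then show ?thesis using norm by (intro exI[of _ "y + (if y < 0 then -1 else 1)"] exI[of _ z]) auto
  next
    case False
    then have "y \<noteq> 0 \<or> z \<noteq> 0" using norm assms(2) by auto
    then show ?thesis
    proof
      assume "y \<noteq> 0"
      then show ?thesis using False norm by (intro exI[of _ "y - sgn y"] exI[of _ z]) (auto simp: sgn_if)
    next
      assume "z \<noteq> 0"
      then show ?thesis using False norm by (intro exI[of _ y] exI[of _ "z - sgn z"]) (auto simp: sgn_if)
    qed
  qed
  then show ?thesis using that assms(1) unfolding oct_E_def oct_V_def by fastforce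
qed

lemma rtrancl_oct_E_to_pole: "v \<in> oct_V n \<Longrightarrow> (v, (int n, 0, 0)) \<in> (oct_E n)\<^sup>*"
proof (induction "nat (int n - fst v)" arbitrary: v)
  case 0
  obtain x y z where v: "v = (x, y, z)" by (cases v)
  with 0 have "x = int n" "y = 0" "z = 0" unfolding oct_V_def by auto
  then show ?case using v by simp
next
  case (Suc m)
  obtain x y z where v: "v = (x, y, z)" by (cases v)
  with Suc.hyps(2) have "x < int n" by simp
  then obtain y' z' where e: "(v, (x + 1, y', z')) \<in> oct_E n"
    using oct_E_step_up Suc.prems v by blast
  then have "(x + 1, y', z') \<in> oct_V n" unfolding oct_E_def by blast
  moreover have "m = nat (int n - fst (x + 1, y', z'))" using Suc.hyps(2) v by simp
  ultimately have "((x + 1, y', z'), (int n, 0, 0)) \<in> (oct_E n)\<^sup>*" using Suc.hyps(1) by blast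
  with e show ?case by (rule converse_rtrancl_into_rtrancl)
qed

lemma oct_E_connected: "u \<in> oct_V n \<Longrightarrow> w \<in> oct_V n \<Longrightarrow> (u, w) \<in> (oct_E n)\<^sup>*"
  using rtrancl_oct_E_to_pole sym_rtrancl[OF sym_oct_E] by (meson rtrancl_trans symD)

lemma l1_dist_le_oct_dist:
  assumes "u \<in> oct_V n" "w \<in> oct_V n"
  shows "l1_dist u w \<le> 2 * int (oct_dist n u w)"
proof -
  have "\<exists>k. (u, w) \<in> oct_E n ^^ k" using oct_E_connected[OF assms] rtrancl_power by blast
  then have "(u, w) \<in> oct_E n ^^ oct_dist n u w" unfolding oct_dist_def by (rule LeastI_ex)
  then show ?thesis by (rule l1_dist_le_if_relpow_oct_E)
qed

lemma oct_dist_pos: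
  assumes "u \<in> oct_V n" "w \<in> oct_V n" "w \<noteq> u"
  shows "0 < oct_dist n u w"
  using l1_dist_pos[of u w] l1_dist_le_oct_dist[OF assms(1,2)] assms(3) by fastforce

lemma finite_oct_V: "finite (oct_V n)"
proof (rule finite_subset)
  show "oct_V n \<subseteq> {-int n..int n} \<times> {-int n..int n} \<times> {-int n..int n}"
    unfolding oct_V_def by auto
qed simp

definition flip_if_neg :: "int \<Rightarrow> int \<Rightarrow> int" where
  "flip_if_neg a x = (if a < 0 then - x else x)"

fun reflect :: "pt \<Rightarrow> pt \<Rightarrow> pt" where
  "reflect (a, b, c) (x, y, z) = (flip_if_neg a x, flip_if_neg b y, flip_if_neg c z)"

lemma reflect_reflect [simp]: "reflect u (reflect u w) = w"
  by (cases u; cases w) (simp add: flip_if_neg_def)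

lemma reflect_mem_oct_V_iff [simp]: "reflect u w \<in> oct_V n \<longleftrightarrow> w \<in> oct_V n"
  by (cases u; cases w) (simp add: oct_V_def flip_if_neg_def)

lemma l1_dist_reflect [simp]: "l1_dist (reflect u v) (reflect u w) = l1_dist v w"
  by (cases u; cases v; cases w) (simp add: flip_if_neg_def abs_minus_commute)

lemma reflect_self: "reflect (a, b, c) (a, b, c) = (\<bar>a\<bar>, \<bar>b\<bar>, \<bar>c\<bar>)"
  by (simp add: flip_if_neg_def)

lemma reflect_eq_iff [simp]: "reflect u v = reflect u w \<longleftrightarrow> v = w"
  by (metis reflect_reflect)

lemma bij_betw_reflect: "bij_betw (reflect u) (oct_V n - {u}) (oct_V n - {reflect u u})"
proof (rule bij_betw_byWitness[where f' = "reflect u"])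
  show "reflect u ` (oct_V n - {reflect u u}) \<subseteq> oct_V n - {u}"
  proof
    fix v assume "v \<in> reflect u ` (oct_V n - {reflect u u})"
    then obtain w where "w \<in> oct_V n" "w \<noteq> reflect u u" "v = reflect u w" by blast
    then show "v \<in> oct_V n - {u}" by (metis Diff_iff reflect_mem_oct_V_iff reflect_reflect singletonD)
  qed
qed auto

definition clip :: "int \<Rightarrow> int \<Rightarrow> int" where
  "clip p x = max 0 (min x p)"

fun half_l1 :: "pt \<Rightarrow> pt \<Rightarrow> int" where
  "half_l1 (a, b, c) (x, y, z) = a + b + c - clip a x - clip b y - clip c z"

lemma abs_diff_eq_clip: "0 \<le> p \<Longrightarrow> \<bar>p - x\<bar> = \<bar>x\<bar> + p - 2 * clip p x"
  unfolding clip_def by auto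

lemma l1_dist_eq_twice_half_l1:
  assumes "0 \<le> a" "0 \<le> b" "0 \<le> c" "\<bar>x\<bar> + \<bar>y\<bar> + \<bar>z\<bar> = a + b + c"
  shows "l1_dist (a, b, c) (x, y, z) = 2 * half_l1 (a, b, c) (x, y, z)"
  using abs_diff_eq_clip[OF assms(1), of x] abs_diff_eq_clip[OF assms(2), of y]
    abs_diff_eq_clip[OF assms(3), of z] assms(4)
  by simp

lemma half_l1_reflect_bounds:
  assumes "u \<in> oct_V n" "w \<in> oct_V n" "w \<noteq> u"
  shows "1 \<le> half_l1 (reflect u u) (reflect u w)"
    and "half_l1 (reflect u u) (reflect u w) \<le> int (oct_dist n u w)"
proof -
  obtain a b c x y z where uw: "reflect u u = (a, b, c)" "reflect u w = (x, y, z)"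
    by (cases "reflect u u"; cases "reflect u w")
  have "(a, b, c) \<in> oct_V n" "(x, y, z) \<in> oct_V n"
    using assms(1,2) uw by (metis reflect_mem_oct_V_iff)+
  moreover have "0 \<le> a \<and> 0 \<le> b \<and> 0 \<le> c"
    using uw(1) by (cases u) (auto simp: flip_if_neg_def)
  ultimately have "l1_dist u w = 2 * half_l1 (reflect u u) (reflect u w)"
    using l1_dist_eq_twice_half_l1 l1_dist_reflect[of u u w] uw unfolding oct_V_def by simp
  with l1_dist_pos[OF assms(3)[symmetric]] l1_dist_le_oct_dist[OF assms(1,2)]
  show "1 \<le> half_l1 (reflect u u) (reflect u w)"
    and "half_l1 (reflect u u) (reflect u w) \<le> int (oct_dist n u w)"
    by linarith+
qed

lemma sum_inv_sq_oct_dist_le_half_l1: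
  assumes "u \<in> oct_V n"
  shows "(\<Sum>w \<in> oct_V n - {u}. 1 / (real (oct_dist n u w))\<^sup>2)
    \<le> (\<Sum>w \<in> oct_V n - {reflect u u}. 1 / (real_of_int (half_l1 (reflect u u) w))\<^sup>2)"
proof -
  have "1 / (real (oct_dist n u w))\<^sup>2 \<le> 1 / (real_of_int (half_l1 (reflect u u) (reflect u w)))\<^sup>2"
    if "w \<in> oct_V n - {u}" for w
  proof -
    have "1 \<le> real_of_int (half_l1 (reflect u u) (reflect u w))"
      "real_of_int (half_l1 (reflect u u) (reflect u w)) \<le> real (oct_dist n u w)"
      using half_l1_reflect_bounds[OF assms, of w] that by simp_all
    then show ?thesis by (intro divide_left_mono power_mono) auto
  qed
  then have "(\<Sum>w \<in> oct_V n - {u}. 1 / (real (oct_dist n u w))\<^sup>2)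
    \<le> (\<Sum>w \<in> oct_V n - {u}. 1 / (real_of_int (half_l1 (reflect u u) (reflect u w)))\<^sup>2)"
    by (rule sum_mono)
  also have "\<dots> = (\<Sum>w \<in> oct_V n - {reflect u u}. 1 / (real_of_int (half_l1 (reflect u u) w))\<^sup>2)"
    by (rule sum.reindex_bij_betw[OF bij_betw_reflect])
  finally show ?thesis .
qed

datatype coord_class = Neg | Mid | Hi

definition classify :: "int \<Rightarrow> int \<Rightarrow> coord_class" where
  "classify p x = (if x < 0 then Neg else if x < p then Mid else Hi)"

lemma classify_eq_iff [simp]:
  "classify p x = Neg \<longleftrightarrow> x < 0"
  "classify p x = Mid \<longleftrightarrow> 0 \<le> x \<and> x < p"
  "classify p x = Hi \<longleftrightarrow> 0 \<le> x \<and> p \<le> x"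
  by (auto simp: classify_def)

definition region :: "nat \<Rightarrow> nat \<Rightarrow> nat \<Rightarrow> coord_class \<times> coord_class \<times> coord_class \<Rightarrow> pt set" where
  "region A B C t = {(x, y, z) \<in> oct_V (A + B + C). (x, y, z) \<noteq> (int A, int B, int C) \<and>
     (classify (int A) x, classify (int B) y, classify (int C) z) = t}"

lemma mem_region_iff [simp]:
  "(x, y, z) \<in> region A B C (s, t, r) \<longleftrightarrow>
     \<bar>x\<bar> + \<bar>y\<bar> + \<bar>z\<bar> = int A + int B + int C \<and> (x, y, z) \<noteq> (int A, int B, int C) \<and>
     classify (int A) x = s \<and> classify (int B) y = t \<and> classify (int C) z = r"
  by (auto simp: region_def oct_V_def)

definition region_sum :: "nat \<Rightarrow> nat \<Rightarrow> nat \<Rightarrow> coord_class \<times> coord_class \<times> coord_class \<Rightarrow> real" where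
  "region_sum A B C t =
     (\<Sum>w \<in> region A B C t. 1 / (real_of_int (half_l1 (int A, int B, int C) w))\<^sup>2)"

lemma sum_le_double_sum_cover:
  fixes f :: "pt \<Rightarrow> real" and g :: "'i \<Rightarrow> 'j \<Rightarrow> pt"
  assumes "finite I" "\<And>i. i \<in> I \<Longrightarrow> finite (J i)"
    and cover: "\<And>x y z. (x, y, z) \<in> S \<Longrightarrow> \<exists>i\<in>I. \<exists>j\<in>J i. (x, y, z) = g i j"
    and nonneg: "\<And>w. 0 \<le> f w"
    and le: "\<And>i j. i \<in> I \<Longrightarrow> j \<in> J i \<Longrightarrow> f (g i j) \<le> h i j"
  shows "sum f S \<le> (\<Sum>i\<in>I. \<Sum>j\<in>J i. h i j)"
proof -
  have fin: "finite (Sigma I J)" using assms(1,2) by blast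
  have "S \<subseteq> (\<lambda>(i, j). g i j) ` Sigma I J" using cover by fastforce
  then have "sum f S \<le> sum f ((\<lambda>(i, j). g i j) ` Sigma I J)"
    using fin nonneg by (intro sum_mono2) auto
  also have "\<dots> \<le> sum (f \<circ> (\<lambda>(i, j). g i j)) (Sigma I J)"
    using fin nonneg by (intro sum_image_le) auto
  also have "\<dots> = (\<Sum>i\<in>I. \<Sum>j\<in>J i. f (g i j))"
    using assms(1,2) by (subst sum.Sigma) (auto simp: case_prod_unfold)
  also have "\<dots> \<le> (\<Sum>i\<in>I. \<Sum>j\<in>J i. h i j)"
    using le by (intro sum_mono) auto
  finally show ?thesis .
qed

definition inv_sq_sum :: "nat \<Rightarrow> real" where
  "inv_sq_sum m = (\<Sum>k = 1..m. 1 / (real k)\<^sup>2)"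

definition tri_ratio :: "nat \<Rightarrow> nat \<Rightarrow> real" where
  "tri_ratio k m = real (k * (k + 1)) / (2 * (real m)\<^sup>2)"

lemma double_triangle_sum: "2 * (\<Sum>i<k. k - i) = k * (k + 1 :: nat)"
proof (induction k)
  case (Suc k)
  have "(\<Sum>i<Suc k. Suc k - i) = (\<Sum>i<k. (k - i) + 1) + 1"
    by (simp add: Suc_diff_le)
  also have "\<dots> = (\<Sum>i<k. k - i) + k + 1"
    by (simp only: sum.distrib) simp
  finally have "(\<Sum>i<Suc k. Suc k - i) = (\<Sum>i<k. k - i) + k + 1" .
  with Suc.IH show ?case by simp
qed simp

lemma triangle_sum_const: "(\<Sum>i<k. \<Sum>j<k - i. c) = real (k * (k + 1)) / 2 * (c :: real)"
proof -
  have "(\<Sum>i<k. \<Sum>j<k - i. c) = real (\<Sum>i<k. k - i) * c"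
    by (simp add: sum_distrib_right)
  also have "real (\<Sum>i<k. k - i) = real (k * (k + 1)) / 2"
    using arg_cong[OF double_triangle_sum[of k], of real] by simp
  finally show ?thesis .
qed

lemma sum_inverse_shift: "(\<Sum>d = 1..m. 1 / real (s + d)) = harm (s + m) - harm s"
  by (induction m) (simp_all add: harm_Suc inverse_eq_divide)

lemma sum_inverse_sq_shift_le:
  assumes "1 \<le> t"
  shows "(\<Sum>d = 1..m. 1 / (real (t + d))\<^sup>2) \<le> 1 / real t - 1 / real (t + m)"
proof (induction m)
  case (Suc m)
  have "1 / (real (t + Suc m))\<^sup>2 \<le> 1 / (real (t + m) * real (t + Suc m))"
    using assms by (intro divide_left_mono) (auto simp: power2_eq_square intro!: mult_right_mono)
  also have "\<dots> = 1 / real (t + m) - 1 / real (t + Suc m)"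
    using assms by (simp add: field_simps)
  finally show ?case using Suc.IH by (simp add: add_ac)
qed simp

lemma double_sum_inverse_sq_le:
  "(\<Sum>d = 1..q. \<Sum>e = 1..r. 1 / (real (s + d + e))\<^sup>2)
     \<le> (harm (s + q) - harm s) - (harm (s + r + q) - harm (s + r))"
proof -
  have "(\<Sum>d = 1..q. \<Sum>e = 1..r. 1 / (real (s + d + e))\<^sup>2)
      \<le> (\<Sum>d = 1..q. 1 / real (s + d) - 1 / real (s + r + d))"
  proof (rule sum_mono)
    fix d assume "d \<in> {1..q}"
    then have "1 \<le> s + d" by simp
    from sum_inverse_sq_shift_le[OF this, of r]
    show "(\<Sum>e = 1..r. 1 / (real (s + d + e))\<^sup>2) \<le> 1 / real (s + d) - 1 / real (s + r + d)"
      by (simp add: add_ac)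
  qed
  also have "\<dots> = (harm (s + q) - harm s) - (harm (s + r + q) - harm (s + r))"
    using sum_inverse_shift[of s q] sum_inverse_shift[of "s + r" q] by (simp add: sum_subtractf)
  finally show ?thesis .
qed

lemma region_sum_Mid_Hi_Hi_le: "region_sum A B C (Mid, Hi, Hi) \<le> harm A + inv_sq_sum A"
proof -
  have "region_sum A B C (Mid, Hi, Hi) \<le> (\<Sum>d = 1..A. \<Sum>e = 0..d. 1 / (real d)\<^sup>2)"
    unfolding region_sum_def
  proof (rule sum_le_double_sum_cover[where g = "\<lambda>d e. (int A - int d, int B + int e, int C + int d - int e)"])
    fix x y z assume "(x, y, z) \<in> region A B C (Mid, Hi, Hi)"
    then show "\<exists>d\<in>{1..A}. \<exists>e\<in>{0..d}. (x, y, z) = (int A - int d, int B + int e, int C + int d - int e)"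
      by (intro bexI[of _ "nat (int A - x)"] bexI[of _ "nat (y - int B)"]) auto
  qed (auto simp: clip_def ac_simps)
  also have "\<dots> = (\<Sum>d = 1..A. 1 / real d + 1 / (real d)\<^sup>2)"
    by (intro sum.cong) (auto simp: field_simps power2_eq_square)
  also have "\<dots> = harm A + inv_sq_sum A"
    by (simp add: sum.distrib harm_def inv_sq_sum_def inverse_eq_divide)
  finally show ?thesis .
qed

lemma region_sum_Neg_Hi_Hi_le: "region_sum A B C (Neg, Hi, Hi) \<le> tri_ratio A A"
proof -
  have "region_sum A B C (Neg, Hi, Hi) \<le> (\<Sum>i<A. \<Sum>j<A - i. 1 / (real A)\<^sup>2)"
    unfolding region_sum_def
  proof (rule sum_le_double_sum_cover[where g = "\<lambda>i j. (int i + int j - int A, int B + int i, int C + int j)"])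
    fix x y z assume "(x, y, z) \<in> region A B C (Neg, Hi, Hi)"
    then show "\<exists>i\<in>{..<A}. \<exists>j\<in>{..<A - i}. (x, y, z) = (int i + int j - int A, int B + int i, int C + int j)"
      by (intro bexI[of _ "nat (y - int B)"] bexI[of _ "nat (z - int C)"]) auto
  qed (auto simp: clip_def ac_simps)
  also have "\<dots> = tri_ratio A A"
    by (subst triangle_sum_const) (simp add: tri_ratio_def)
  finally show ?thesis .
qed

lemma region_sum_Hi_Neg_Mid_le: "region_sum A B C (Hi, Neg, Mid) \<le> harm (B + C) - harm B"
proof -
  have "region_sum A B C (Hi, Neg, Mid) \<le> (\<Sum>d = 1..C. \<Sum>f = 1..B + d. 1 / (real (B + d))\<^sup>2)"
    unfolding region_sum_def
  proof (rule sum_le_double_sum_cover[where g = "\<lambda>d f. (int A + int B + int d - int f, - int f, int C - int d)"])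
    fix x y z assume "(x, y, z) \<in> region A B C (Hi, Neg, Mid)"
    then show "\<exists>d\<in>{1..C}. \<exists>f\<in>{1..B + d}. (x, y, z) = (int A + int B + int d - int f, - int f, int C - int d)"
      by (intro bexI[of _ "nat (int C - z)"] bexI[of _ "nat (- y)"]) auto
  qed (auto simp: clip_def ac_simps)
  also have "\<dots> = (\<Sum>d = 1..C. 1 / real (B + d))"
    by (intro sum.cong) (auto simp: power2_eq_square)
  also have "\<dots> = harm (B + C) - harm B" by (rule sum_inverse_shift)
  finally show ?thesis .
qed

lemma region_sum_Mid_Neg_Neg_le: "region_sum A B C (Mid, Neg, Neg) \<le> harm (A + B + C) - harm (B + C)"
proof -
  have "region_sum A B C (Mid, Neg, Neg) \<le> (\<Sum>d = 1..A. \<Sum>f = 1..B + C + d - 1. 1 / (real (B + C + d))\<^sup>2)"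
    unfolding region_sum_def
  proof (rule sum_le_double_sum_cover[where g = "\<lambda>d f. (int A - int d, - int f, int f - int B - int C - int d)"])
    fix x y z assume "(x, y, z) \<in> region A B C (Mid, Neg, Neg)"
    then show "\<exists>d\<in>{1..A}. \<exists>f\<in>{1..B + C + d - 1}. (x, y, z) = (int A - int d, - int f, int f - int B - int C - int d)"
      by (intro bexI[of _ "nat (int A - x)"] bexI[of _ "nat (- y)"]) auto
  qed (auto simp: clip_def ac_simps)
  also have "\<dots> \<le> (\<Sum>d = 1..A. 1 / real (B + C + d))"
  proof (rule sum_mono)
    fix d assume "d \<in> {1..A}"
    then have "real (B + C + d - 1) \<le> real (B + C + d)" "0 < real (B + C + d)" by auto
    then show "(\<Sum>f = 1..B + C + d - 1. 1 / (real (B + C + d))\<^sup>2) \<le> 1 / real (B + C + d)"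
      by (simp add: power2_eq_square divide_le_eq)
  qed
  also have "\<dots> = harm (A + B + C) - harm (B + C)"
    using sum_inverse_shift[of "B + C" A] by (simp add: add_ac)
  finally show ?thesis .
qed

lemma region_sum_Hi_Mid_Mid_le: "region_sum A B C (Hi, Mid, Mid) \<le> harm B + harm C - harm (B + C)"
proof -
  have "region_sum A B C (Hi, Mid, Mid) \<le> (\<Sum>d = 1..B. \<Sum>e = 1..C. 1 / (real (0 + d + e))\<^sup>2)"
    unfolding region_sum_def
  proof (rule sum_le_double_sum_cover[where g = "\<lambda>d e. (int A + int d + int e, int B - int d, int C - int e)"])
    fix x y z assume "(x, y, z) \<in> region A B C (Hi, Mid, Mid)"
    then show "\<exists>d\<in>{1..B}. \<exists>e\<in>{1..C}. (x, y, z) = (int A + int d + int e, int B - int d, int C - int e)"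
      by (intro bexI[of _ "nat (int B - y)"] bexI[of _ "nat (int C - z)"]) auto
  qed (auto simp: clip_def ac_simps)
  also have "\<dots> \<le> (harm (0 + B) - harm 0) - (harm (0 + C + B) - harm (0 + C))"
    by (rule double_sum_inverse_sq_le)
  finally show ?thesis by (simp add: add_ac harm_expand(1))
qed

lemma region_sum_Neg_Mid_Mid_le:
  "region_sum A B C (Neg, Mid, Mid) \<le> harm (A + B) - harm A + harm (A + C) - harm (A + B + C)"
proof -
  have "region_sum A B C (Neg, Mid, Mid) \<le> (\<Sum>d = 1..B. \<Sum>e = 1..C. 1 / (real (A + d + e))\<^sup>2)"
    unfolding region_sum_def
  proof (rule sum_le_double_sum_cover[where g = "\<lambda>d e. (- int A - int d - int e, int B - int d, int C - int e)"])
    fix x y z assume "(x, y, z) \<in> region A B C (Neg, Mid, Mid)"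
    then show "\<exists>d\<in>{1..B}. \<exists>e\<in>{1..C}. (x, y, z) = (- int A - int d - int e, int B - int d, int C - int e)"
      by (intro bexI[of _ "nat (int B - y)"] bexI[of _ "nat (int C - z)"]) auto
  qed (auto simp: clip_def ac_simps)
  also have "\<dots> \<le> (harm (A + B) - harm A) - (harm (A + C + B) - harm (A + C))"
    by (rule double_sum_inverse_sq_le)
  finally show ?thesis by (simp add: add_ac)
qed

lemma region_sum_Hi_Neg_Neg_le: "region_sum A B C (Hi, Neg, Neg) \<le> tri_ratio (B + C - 1) (B + C)"
proof -
  have "region_sum A B C (Hi, Neg, Neg) \<le> (\<Sum>i<B + C - 1. \<Sum>j<B + C - 1 - i. 1 / (real (B + C))\<^sup>2)"
    unfolding region_sum_def
  proof (rule sum_le_double_sum_cover[where g = "\<lambda>i j. (int A + int B + int C - int i - int j - 2, - int i - 1, - int j - 1)"])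
    fix x y z assume "(x, y, z) \<in> region A B C (Hi, Neg, Neg)"
    then show "\<exists>i\<in>{..<B + C - 1}. \<exists>j\<in>{..<B + C - 1 - i}.
        (x, y, z) = (int A + int B + int C - int i - int j - 2, - int i - 1, - int j - 1)"
      by (intro bexI[of _ "nat (- y - 1)"] bexI[of _ "nat (- z - 1)"]) auto
  qed (auto simp: clip_def ac_simps)
  also have "\<dots> = tri_ratio (B + C - 1) (B + C)"
    by (subst triangle_sum_const) (simp add: tri_ratio_def)
  finally show ?thesis .
qed

lemma region_sum_Neg_Neg_Neg_le: "region_sum A B C (Neg, Neg, Neg) \<le> tri_ratio (A + B + C - 2) (A + B + C)"
proof -
  have "region_sum A B C (Neg, Neg, Neg)
      \<le> (\<Sum>i<A + B + C - 2. \<Sum>j<A + B + C - 2 - i. 1 / (real (A + B + C))\<^sup>2)"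
    unfolding region_sum_def
  proof (rule sum_le_double_sum_cover[where g = "\<lambda>i j. (- int i - 1, - int j - 1, int i + int j + 2 - int A - int B - int C)"])
    fix x y z assume "(x, y, z) \<in> region A B C (Neg, Neg, Neg)"
    then show "\<exists>i\<in>{..<A + B + C - 2}. \<exists>j\<in>{..<A + B + C - 2 - i}.
        (x, y, z) = (- int i - 1, - int j - 1, int i + int j + 2 - int A - int B - int C)"
      by (intro bexI[of _ "nat (- x - 1)"] bexI[of _ "nat (- y - 1)"]) auto
  qed (auto simp: clip_def ac_simps)
  also have "\<dots> = tri_ratio (A + B + C - 2) (A + B + C)"
    by (subst triangle_sum_const) (simp add: tri_ratio_def)
  finally show ?thesis .
qed

lemma region_Mid_Mid_Mid: "region A B C (Mid, Mid, Mid) = {}"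
  by (auto simp: region_def oct_V_def)

lemma region_Hi_Hi_Hi: "region A B C (Hi, Hi, Hi) = {}"
  by (auto simp: region_def oct_V_def)

lemma region_sum_swap12: "region_sum A B C (s, t, r) = region_sum B A C (t, s, r)"
  unfolding region_sum_def
  by (rule sum.reindex_bij_witness[where i = "\<lambda>(x, y, z). (y, x, z)" and j = "\<lambda>(x, y, z). (y, x, z)"])
     (auto simp: region_def oct_V_def algebra_simps)

lemma region_sum_swap13: "region_sum A B C (s, t, r) = region_sum C B A (r, t, s)"
  unfolding region_sum_def
  by (rule sum.reindex_bij_witness[where i = "\<lambda>(x, y, z). (z, y, x)" and j = "\<lambda>(x, y, z). (z, y, x)"])
     (auto simp: region_def oct_V_def algebra_simps)

lemma region_sum_swap23: "region_sum A B C (s, t, r) = region_sum A C B (s, r, t)"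
  unfolding region_sum_def
  by (rule sum.reindex_bij_witness[where i = "\<lambda>(x, y, z). (x, z, y)" and j = "\<lambda>(x, y, z). (x, z, y)"])
     (auto simp: region_def oct_V_def algebra_simps)

lemma UNIV_coord_class: "(UNIV :: coord_class set) = {Neg, Mid, Hi}"
  using coord_class.exhaust by auto

lemma sum_half_l1_eq_region_sums:
  "(\<Sum>w \<in> oct_V (A + B + C) - {(int A, int B, int C)}. 1 / (real_of_int (half_l1 (int A, int B, int C) w))\<^sup>2)
   = (\<Sum>s\<in>{Neg, Mid, Hi}. \<Sum>t\<in>{Neg, Mid, Hi}. \<Sum>r\<in>{Neg, Mid, Hi}. region_sum A B C (s, t, r))"
proof -
  let ?corner = "(int A, int B, int C)"
  let ?class = "\<lambda>(x, y, z). (classify (int A) x, classify (int B) y, classify (int C) z)"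
  have region_eq: "{w \<in> oct_V (A + B + C) - {?corner}. ?class w = t} = region A B C t" for t
    by (auto simp: region_def)
  have "finite (UNIV :: (coord_class \<times> coord_class \<times> coord_class) set)"
    by (simp add: UNIV_coord_class flip: UNIV_Times_UNIV)
  then have "(\<Sum>w \<in> oct_V (A + B + C) - {?corner}. 1 / (real_of_int (half_l1 ?corner w))\<^sup>2)
      = (\<Sum>t \<in> UNIV. \<Sum>w \<in> {w \<in> oct_V (A + B + C) - {?corner}. ?class w = t}.
           1 / (real_of_int (half_l1 ?corner w))\<^sup>2)"
    by (intro sum.group[symmetric]) (simp_all add: finite_oct_V)
  also have "\<dots> = (\<Sum>t \<in> UNIV. region_sum A B C t)"
    unfolding region_eq region_sum_def ..
  also have "\<dots> = (\<Sum>s\<in>{Neg, Mid, Hi}. \<Sum>t\<in>{Neg, Mid, Hi}. \<Sum>r\<in>{Neg, Mid, Hi}. region_sum A B C (s, t, r))"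
    by (simp only: UNIV_coord_class sum.cartesian_product' flip: UNIV_Times_UNIV)
  finally show ?thesis .
qed

text \<open>The sum of the 27 region bounds below, after the harmonic numbers have telescoped.\<close>
definition majorant :: "nat \<Rightarrow> nat \<Rightarrow> nat \<Rightarrow> real" where
  "majorant A B C = 2 * harm (A + B) + 2 * harm (A + C) + 2 * harm (B + C)
     + inv_sq_sum A + inv_sq_sum B + inv_sq_sum C + tri_ratio A A + tri_ratio B B + tri_ratio C C
     + tri_ratio (B + C - 1) (B + C) + tri_ratio (A + C - 1) (A + C) + tri_ratio (A + B - 1) (A + B)
     + tri_ratio (A + B + C - 2) (A + B + C)"

lemma region_sum_Mid_Hi_Hi_perms_le:
  shows "region_sum A B C (Hi, Hi, Mid) \<le> harm C + inv_sq_sum C"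
    and "region_sum A B C (Hi, Mid, Hi) \<le> harm B + inv_sq_sum B"
    and "region_sum A B C (Mid, Hi, Hi) \<le> harm A + inv_sq_sum A"
  using region_sum_Mid_Hi_Hi_le[of C B A] region_sum_swap13[of A B C]
    region_sum_Mid_Hi_Hi_le[of B A C] region_sum_swap12[of A B C]
    region_sum_Mid_Hi_Hi_le[of A B C]
  by simp_all

lemma region_sum_Neg_Hi_Hi_perms_le:
  shows "region_sum A B C (Hi, Hi, Neg) \<le> tri_ratio C C"
    and "region_sum A B C (Hi, Neg, Hi) \<le> tri_ratio B B"
    and "region_sum A B C (Neg, Hi, Hi) \<le> tri_ratio A A"
  using region_sum_Neg_Hi_Hi_le[of C B A] region_sum_swap13[of A B C]
    region_sum_Neg_Hi_Hi_le[of B A C] region_sum_swap12[of A B C]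
    region_sum_Neg_Hi_Hi_le[of A B C]
  by simp_all

lemma region_sum_Hi_Neg_Mid_perms_le:
  shows "region_sum A B C (Hi, Neg, Mid) \<le> harm (B + C) - harm B"
    and "region_sum A B C (Hi, Mid, Neg) \<le> harm (B + C) - harm C"
    and "region_sum A B C (Neg, Hi, Mid) \<le> harm (A + C) - harm A"
    and "region_sum A B C (Mid, Hi, Neg) \<le> harm (A + C) - harm C"
    and "region_sum A B C (Neg, Mid, Hi) \<le> harm (A + B) - harm A"
    and "region_sum A B C (Mid, Neg, Hi) \<le> harm (A + B) - harm B"
  using region_sum_Hi_Neg_Mid_le[of A B C]
    region_sum_Hi_Neg_Mid_le[of A C B] region_sum_swap23[of A B C]
    region_sum_Hi_Neg_Mid_le[of B A C] region_sum_swap12[of A B C]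
    region_sum_Hi_Neg_Mid_le[of B C A] region_sum_swap23[of B A C]
    region_sum_Hi_Neg_Mid_le[of C A B] region_sum_swap13[of B A C]
    region_sum_Hi_Neg_Mid_le[of C B A] region_sum_swap13[of A B C]
  by (simp_all add: add_ac)

lemma region_sum_Mid_Neg_Neg_perms_le:
  shows "region_sum A B C (Mid, Neg, Neg) \<le> harm (A + B + C) - harm (B + C)"
    and "region_sum A B C (Neg, Mid, Neg) \<le> harm (A + B + C) - harm (A + C)"
    and "region_sum A B C (Neg, Neg, Mid) \<le> harm (A + B + C) - harm (A + B)"
  using region_sum_Mid_Neg_Neg_le[of A B C]
    region_sum_Mid_Neg_Neg_le[of B A C] region_sum_swap12[of A B C]
    region_sum_Mid_Neg_Neg_le[of C B A] region_sum_swap13[of A B C]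
  by (simp_all add: add_ac)

lemma region_sum_Hi_Mid_Mid_perms_le:
  shows "region_sum A B C (Hi, Mid, Mid) \<le> harm B + harm C - harm (B + C)"
    and "region_sum A B C (Mid, Hi, Mid) \<le> harm A + harm C - harm (A + C)"
    and "region_sum A B C (Mid, Mid, Hi) \<le> harm A + harm B - harm (A + B)"
  using region_sum_Hi_Mid_Mid_le[of A B C]
    region_sum_Hi_Mid_Mid_le[of B A C] region_sum_swap12[of A B C]
    region_sum_Hi_Mid_Mid_le[of C B A] region_sum_swap13[of A B C]
  by (simp_all add: add_ac)

lemma region_sum_Neg_Mid_Mid_perms_le:
  shows "region_sum A B C (Neg, Mid, Mid) \<le> harm (A + B) - harm A + harm (A + C) - harm (A + B + C)"
    and "region_sum A B C (Mid, Neg, Mid) \<le> harm (A + B) - harm B + harm (B + C) - harm (A + B + C)"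
    and "region_sum A B C (Mid, Mid, Neg) \<le> harm (A + C) - harm C + harm (B + C) - harm (A + B + C)"
  using region_sum_Neg_Mid_Mid_le[of A B C]
    region_sum_Neg_Mid_Mid_le[of B A C] region_sum_swap12[of A B C]
    region_sum_Neg_Mid_Mid_le[of C B A] region_sum_swap13[of A B C]
  by (simp_all add: add_ac)

lemma region_sum_Hi_Neg_Neg_perms_le:
  shows "region_sum A B C (Hi, Neg, Neg) \<le> tri_ratio (B + C - 1) (B + C)"
    and "region_sum A B C (Neg, Hi, Neg) \<le> tri_ratio (A + C - 1) (A + C)"
    and "region_sum A B C (Neg, Neg, Hi) \<le> tri_ratio (A + B - 1) (A + B)"
  using region_sum_Hi_Neg_Neg_le[of A B C]
    region_sum_Hi_Neg_Neg_le[of B A C] region_sum_swap12[of A B C]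
    region_sum_Hi_Neg_Neg_le[of C B A] region_sum_swap13[of A B C]
  by (simp_all add: add_ac)

lemma sum_half_l1_le_majorant:
  "(\<Sum>w \<in> oct_V (A + B + C) - {(int A, int B, int C)}. 1 / (real_of_int (half_l1 (int A, int B, int C) w))\<^sup>2)
   \<le> majorant A B C"
proof -
  have "region_sum A B C (Hi, Hi, Hi) = 0" "region_sum A B C (Mid, Mid, Mid) = 0"
    by (simp_all add: region_sum_def region_Hi_Hi_Hi region_Mid_Mid_Mid)
  with region_sum_Mid_Hi_Hi_perms_le[of A B C] region_sum_Neg_Hi_Hi_perms_le[of A B C]
    region_sum_Hi_Neg_Mid_perms_le[of A B C] region_sum_Mid_Neg_Neg_perms_le[of A B C]
    region_sum_Hi_Mid_Mid_perms_le[of A B C] region_sum_Neg_Mid_Mid_perms_le[of A B C]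
    region_sum_Hi_Neg_Neg_perms_le[of A B C] region_sum_Neg_Neg_Neg_le[of A B C]
  show ?thesis
    unfolding sum_half_l1_eq_region_sums majorant_def by (simp add: add_ac)
qed

lemma harm_le_ln: "harm m \<le> 13/22 + ln (real m + 1) - 1 / (2 * (real m + 1))"
proof (cases m)
  case (Suc k)
  have "harm (Suc k) - ln (real (k + 2)) + 1 / real (2 * (k + 2)) \<le> (euler_mascheroni :: real)"
    by (rule euler_mascheroni_lower)
  with euler_mascheroni_less_13_over_22 Suc show ?thesis by (simp add: add_ac)
qed (simp add: harm_expand(1))

text \<open>Telescoping against \<open>1 / (k\<^sup>2) \<le> 2 / (2k - 1) - 2 / (2k + 1)\<close>.\<close>
lemma inv_sq_sum_tail: "4 \<le> m \<Longrightarrow> inv_sq_sum m + 2 / (2 * real m + 1) \<le> inv_sq_sum 4 + 2 / 9"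
proof (induction m rule: dec_induct)
  case (step m)
  have "(2 * real m + 1) * (2 * real m + 3) \<le> 4 * (real (Suc m))\<^sup>2"
    by (simp add: power2_eq_square algebra_simps)
  then have "1 / (real (Suc m))\<^sup>2 \<le> 4 / ((2 * real m + 1) * (2 * real m + 3))"
    by (simp add: divide_simps)
  also have "\<dots> = 2 / (2 * real m + 1) - 2 / (2 * real (Suc m) + 1)"
    by (simp add: field_simps)
  finally show ?case
    using step.IH by (simp add: inv_sq_sum_def)
qed simp

lemma inv_sq_sum_le: "1 \<le> m \<Longrightarrow> inv_sq_sum m \<le> 1647/1000 - 1 / (real m + 1)"
proof (cases "4 \<le> m")
  case True
  have "inv_sq_sum 4 = 205/144"
    by (simp add: inv_sq_sum_def numeral_eq_Suc)
  moreover have "1 / (real m + 1) \<le> 2 / (2 * real m + 1)"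
    by (simp add: field_simps)
  ultimately show ?thesis using inv_sq_sum_tail[OF True] by simp
next
  case False
  moreover assume "1 \<le> m"
  ultimately have "m = 1 \<or> m = 2 \<or> m = 3" by auto
  then show ?thesis by (auto simp: inv_sq_sum_def numeral_eq_Suc)
qed

lemma inv_sq_sum_plus_tri_ratio_le: "inv_sq_sum m + tri_ratio m m \<le> 2147/1000"
proof (cases "m = 0")
  case False
  then have "tri_ratio m m = 1/2 + 1 / (2 * real m)"
    by (simp add: tri_ratio_def field_simps power2_eq_square)
  moreover have "1 / (2 * real m) \<le> 1 / (real m + 1)"
    using False by (simp add: field_simps)
  ultimately show ?thesis using inv_sq_sum_le[of m] False by simp
qed (simp add: inv_sq_sum_def tri_ratio_def)

lemma tri_ratio_pred_le: "tri_ratio (q - 1) q \<le> 1/2 - 1 / (2 * (real q + 1))"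
proof (cases "q = 0")
  case False
  then have "tri_ratio (q - 1) q = 1/2 - 1 / (2 * real q)"
    by (simp add: tri_ratio_def field_simps power2_eq_square of_nat_diff)
  moreover have "1 / (2 * (real q + 1)) \<le> 1 / (2 * real q)"
    using False by (simp add: field_simps)
  ultimately show ?thesis by simp
qed (simp add: tri_ratio_def)

lemma harm_tri_ratio_le:
  "2 * harm p + tri_ratio (p - 1) p \<le> 13/11 + 1/2 + 2 * ln (real p + 1) - 3/2 * (1 / (real p + 1))"
  using harm_le_ln[of p] tri_ratio_pred_le[of p] by (simp add: field_simps)

text \<open>Jensen's inequality for \<open>ln\<close> and the AM-HM inequality, each from a tangent line at the mean.\<close>
lemma ln_sum3_le:
  fixes a b c :: real
  assumes "0 < a" "0 < b" "0 < c"
  shows "ln a + ln b + ln c \<le> 3 * ln ((a + b + c) / 3)"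
proof -
  define M where "M = (a + b + c) / 3"
  have "0 < M" "a + b + c = 3 * M" using assms by (simp_all add: M_def)
  have "ln x \<le> ln M + x / M - 1" if "0 < x" for x
    using ln_le_minus_one[of "x / M"] \<open>0 < M\<close> that by (simp add: ln_div)
  from this[OF assms(1)] this[OF assms(2)] this[OF assms(3)]
  have "ln a + ln b + ln c \<le> 3 * ln M + (a + b + c) / M - 3"
    by (simp add: add_divide_distrib)
  with \<open>0 < M\<close> show ?thesis unfolding \<open>a + b + c = 3 * M\<close> by simp
qed

lemma inverse_sum3_ge:
  fixes a b c :: real
  assumes "0 < a" "0 < b" "0 < c"
  shows "9 / (a + b + c) \<le> 1 / a + 1 / b + 1 / c"
proof -
  define M where "M = (a + b + c) / 3"
  have "0 < M" "a + b + c = 3 * M" using assms by (simp_all add: M_def)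
  have "2 / M - x / M\<^sup>2 \<le> 1 / x" if "0 < x" for x
  proof -
    have "1 / x - (2 / M - x / M\<^sup>2) = (x - M)\<^sup>2 / (x * M\<^sup>2)"
      using that \<open>0 < M\<close> by (simp add: field_simps power2_eq_square)
    moreover have "0 \<le> (x - M)\<^sup>2 / (x * M\<^sup>2)" using that by simp
    ultimately show ?thesis by linarith
  qed
  from this[OF assms(1)] this[OF assms(2)] this[OF assms(3)]
  have "6 / M - (a + b + c) / M\<^sup>2 \<le> 1 / a + 1 / b + 1 / c"
    by (simp add: add_divide_distrib)
  moreover have "6 / M - (a + b + c) / M\<^sup>2 = 9 / (a + b + c)"
    unfolding \<open>a + b + c = 3 * M\<close> using \<open>0 < M\<close> by (simp add: field_simps power2_eq_square)
  ultimately show ?thesis by simp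
qed

lemma ln3_gt_1098: "1098/1000 \<le> ln (3 :: real)"
  using ln_approx_bounds[of 3 4] by (simp add: eval_nat_numeral)

lemma rational_remainder_le:
  fixes n :: real
  assumes "4 \<le> n"
  shows "(n - 1) * (n - 2) / (2 * n\<^sup>2) + 9 * (inverse (2 * n) + inverse (2 * n + 3))
      - 3/2 * (9 / (2 * n + 3)) \<le> 106/100"
proof -
  have pos: "0 < n" "0 < 2 * n + 3" using assms by auto
  have "(n - 1) * (n - 2) / (2 * n\<^sup>2) + 9 * (inverse (2 * n) + inverse (2 * n + 3))
      - 3/2 * (9 / (2 * n + 3))
      = (2 * n^3 + 6 * n\<^sup>2 + 22 * n + 6) / (2 * n\<^sup>2 * (2 * n + 3))"
    using pos by (simp add: divide_simps power2_eq_square power3_eq_cube) (simp add: algebra_simps)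
  also have "\<dots> \<le> 106/100"
  proof -
    have "16 \<le> n\<^sup>2"
      using assms mult_mono[of 4 n 4 n] by (simp add: power2_eq_square)
    then have "16 * n \<le> n^3"
      using pos mult_right_mono[of 16 "n\<^sup>2" n] by (simp add: power2_eq_square power3_eq_cube)
    moreover have "106/100 * (2 * n\<^sup>2 * (2 * n + 3)) = 424/100 * n^3 + 636/100 * n\<^sup>2"
      by (simp add: algebra_simps power2_eq_square power3_eq_cube)
    ultimately have "2 * n^3 + 6 * n\<^sup>2 + 22 * n + 6 \<le> 106/100 * (2 * n\<^sup>2 * (2 * n + 3))"
      using assms \<open>16 \<le> n\<^sup>2\<close> by linarith
    then show ?thesis using pos by (simp add: divide_le_eq)
  qed
  finally show ?thesis .
qed

lemma majorant_le_large:
  assumes "4 \<le> A + B + C"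
  shows "majorant A B C \<le> 6 + 6 * ln (2 * real (A + B + C))"
proof -
  txt \<open>The three numbers \<open>A + B + 1, A + C + 1, B + C + 1\<close> add up to \<open>2n + 3\<close>, so concavity of
    \<open>ln\<close> and convexity of \<open>1 / x\<close> bound their contributions by functions of \<open>n\<close> alone.\<close>
  define n where "n = real (A + B + C)"
  have "4 \<le> n" "0 < 2 * n" using assms by (simp_all add: n_def)
  have qsum: "real (A + B) + 1 + (real (A + C) + 1) + (real (B + C) + 1) = 2 * n + 3"
    by (simp add: n_def)
  have "ln (real (A + B) + 1) + ln (real (A + C) + 1) + ln (real (B + C) + 1) \<le> 3 * ln ((2 * n + 3) / 3)"
    using ln_sum3_le[of "real (A + B) + 1" "real (A + C) + 1" "real (B + C) + 1", unfolded qsum] by simp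
  moreover have "9 / (2 * n + 3) \<le> 1 / (real (A + B) + 1) + 1 / (real (A + C) + 1) + 1 / (real (B + C) + 1)"
    using inverse_sum3_ge[of "real (A + B) + 1" "real (A + C) + 1" "real (B + C) + 1", unfolded qsum] by simp
  moreover have "ln ((2 * n + 3) / 3) = ln (2 * n + 3) - ln 3"
    using \<open>0 < 2 * n\<close> by (simp add: ln_div)
  moreover have "ln (2 * n + 3) - ln (2 * n) \<le> 3 * (inverse (2 * n) + inverse (2 * n + 3)) / 2"
    using ln_inverse_approx_le[of "2 * n" 3] \<open>0 < 2 * n\<close> by simp
  moreover have "tri_ratio (A + B + C - 2) (A + B + C) = (n - 1) * (n - 2) / (2 * n\<^sup>2)"
  proof -
    define k where "k = A + B + C - 2"
    have "A + B + C = k + 2" "n = real k + 2" using assms by (simp_all add: k_def n_def)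
    then show ?thesis by (simp add: tri_ratio_def algebra_simps power2_eq_square)
  qed
  ultimately show ?thesis
    using harm_tri_ratio_le[of "A + B"] harm_tri_ratio_le[of "A + C"] harm_tri_ratio_le[of "B + C"]
      inv_sq_sum_plus_tri_ratio_le[of A] inv_sq_sum_plus_tri_ratio_le[of B]
      inv_sq_sum_plus_tri_ratio_le[of C] rational_remainder_le[OF \<open>4 \<le> n\<close>] ln3_gt_1098
    unfolding majorant_def n_def[symmetric] by linarith
qed

lemma majorant_le_small:
  shows "A + B + C = 1 \<Longrightarrow> majorant A B C \<le> 10"
    and "A + B + C = 2 \<Longrightarrow> majorant A B C \<le> 14"
    and "A + B + C = 3 \<Longrightarrow> majorant A B C \<le> 16"
proof -
  have small: "harm 0 = (0::real)" "harm 1 = (1::real)" "harm 2 = (3/2::real)" "harm 3 = (11/6::real)"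
    "inv_sq_sum 0 = 0" "inv_sq_sum 1 = 1" "inv_sq_sum 2 = 5/4" "inv_sq_sum 3 = 49/36"
    "harm (Suc 0) = (1::real)" "harm (Suc (Suc 0)) = (3/2::real)" "harm (Suc (Suc (Suc 0))) = (11/6::real)"
    "inv_sq_sum (Suc 0) = 1" "inv_sq_sum (Suc (Suc 0)) = 5/4" "inv_sq_sum (Suc (Suc (Suc 0))) = 49/36"
    by (simp_all add: harm_def inv_sq_sum_def numeral_eq_Suc)
  have "A \<le> 3" "B \<le> 3" if "A + B + C \<le> 3" using that by simp_all
  then have cases: "A \<in> {0, 1, 2, 3}" "B \<in> {0, 1, 2, 3}" if "A + B + C \<le> 3"
    using that by fastforce+
  show "A + B + C = 1 \<Longrightarrow> majorant A B C \<le> 10"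
    using cases by (auto simp: majorant_def tri_ratio_def small)
  show "A + B + C = 2 \<Longrightarrow> majorant A B C \<le> 14"
    using cases by (auto simp: majorant_def tri_ratio_def small)
  show "A + B + C = 3 \<Longrightarrow> majorant A B C \<le> 16"
    using cases by (auto simp: majorant_def tri_ratio_def small)
qed

lemma majorant_le:
  assumes "1 \<le> A + B + C"
  shows "majorant A B C \<le> 6 + 6 * ln (2 * real (A + B + C))"
proof -
  have ln2: "2/3 \<le> ln (2::real)" by (rule ln2_ge_two_thirds)
  have ln_double: "ln (2 * real (A + B + C)) = ln 2 + ln (real (A + B + C))"
    using assms ln_mult[of 2 "real (A + B + C)"] by simp
  consider "A + B + C = 1" | "A + B + C = 2" | "A + B + C = 3" | "4 \<le> A + B + C"
    using assms by linarith
  then show ?thesis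
  proof cases
    case 1
    then show ?thesis using majorant_le_small(1)[OF 1] ln2 by simp
  next
    case 2
    then show ?thesis using majorant_le_small(2)[OF 2] ln_double ln2 by simp
  next
    case 3
    then show ?thesis using majorant_le_small(3)[OF 3] ln_double ln2 ln3_gt_1098 by simp
  next
    case 4
    then show ?thesis by (rule majorant_le_large)
  qed
qed

lemma sum_inv_sq_oct_dist_pos:
  assumes "1 \<le> n" "u \<in> oct_V n"
  shows "0 < (\<Sum>w \<in> oct_V n - {u}. 1 / (real (oct_dist n u w))\<^sup>2)"
proof (rule sum_pos)
  obtain a b c where u: "u = (a, b, c)" by (cases u)
  have "(- a, - b, - c) \<in> oct_V n - {u}"
    using assms u unfolding oct_V_def by auto
  then show "oct_V n - {u} \<noteq> {}" by blast
qed (use assms oct_dist_pos finite_oct_V in auto)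

lemma sum_inv_sq_oct_dist_le_ln:
  assumes "1 \<le> n" "u \<in> oct_V n"
  shows "(\<Sum>w \<in> oct_V n - {u}. 1 / (real (oct_dist n u w))\<^sup>2) \<le> 6 + 6 * ln (2 * real n)"
proof -
  obtain a b c where u: "u = (a, b, c)" by (cases u)
  define A B C where "A = nat \<bar>a\<bar>" "B = nat \<bar>b\<bar>" "C = nat \<bar>c\<bar>"
  have corner: "reflect u u = (int A, int B, int C)"
    unfolding u A_B_C_def reflect_self by simp
  have "A + B + C = n"
    using assms(2) unfolding u A_B_C_def oct_V_def by simp
  with sum_inv_sq_oct_dist_le_half_l1[OF assms(2)] sum_half_l1_le_majorant[of A B C]
    majorant_le[of A B C] assms(1)
  show ?thesis unfolding corner by force
qed

theorem lemma4:
  fixes n :: nat and u :: pt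
  assumes "n \<ge> 1" and "u \<in> oct_V n"
  shows "oct_Z n u \<ge> 1 / (6 * ln (2 * exp 1 * real n))"
proof -
  have "ln (2 * exp 1 * real n) = 1 + ln (2 * real n)"
    using assms(1) by (simp add: ln_mult)
  then have "1 / (6 * ln (2 * exp 1 * real n)) = 1 / (6 + 6 * ln (2 * real n))"
    by (simp add: algebra_simps)
  also have "\<dots> \<le> 1 / (\<Sum>w \<in> oct_V n - {u}. 1 / (real (oct_dist n u w))\<^sup>2)"
    using sum_inv_sq_oct_dist_pos[OF assms] sum_inv_sq_oct_dist_le_ln[OF assms]
    by (intro divide_left_mono) auto
  also have "\<dots> = oct_Z n u"
    by (simp add: oct_Z_def inverse_eq_divide)
  finally show ?thesis .
qed

end
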